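(* Let $G$ be a planar PCC graph and let $\sigma,\sigma',\kappa$ be faces with $|\sigma|,|\sigma'|\ge 20$ and $|\kappa|\le 6$. Let $e,e'$ be edges on the boundary of $\kappa$ such that $e$ lies on the boundary of $\sigma$ and $e'$ lies on the boundary of $\sigma'$. Then $\sigma=\sigma'$ and $e=e'$.
   Context: $G$ is a finite simple connected graph 2-cell embedded in the sphere; $|\sigma|$ denotes the length of the boundary walk of a face $\sigma$; for a vertex $v$, $F(v)$ is the multiset of faces incident to $v$ (one per corner) and $K(v)=1-\frac{\deg(v)}{2}+\sum_{\sigma\in F(v)}\frac1{|\sigma|}$. A prism (resp. antiprism) of order $N$ is the planar graph with $2N$ vertices, two $N$-faces and $N$ quadrilaterals (resp. $2N$ triangles), each vertex incident to two quadrilaterals and one $N$-face (resp. three triangles and one $N$-face). A planar PCC graph is such a $G$ with $K(v)>0$, $\deg(v)\ge3$ for all $v$, not a prism or antiprism. *)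

theory Defs
  imports Complex_Main
begin

text \<open>
  A finite connected graph 2-cell embedded in an orientable surface is encoded, as usual,
  by a combinatorial map (rotation system) on a finite set D of darts (half-edges):
  alpha is the fixed-point-free involution pairing the two darts of an edge, rho is the
  rotation permutation (cyclic order of darts around their common tail vertex).  The dart x at vertex v represents the corner (x, rho x) of v, and this
  corner lies in the face containing x.  Hence the length of the boundary walk of a face is
  the number of darts in its orbit, and an edge lies on the boundary of a face iff they share
  a dart.  The embedding is in the sphere iff the map is connected and V - E + F = 2.
\<close>

definition orb :: "('d \<Rightarrow> 'd) \<Rightarrow> 'd \<Rightarrow> 'd set" where
  "orb f x = {(f ^^ n) x | n. True}"

definition face_perm :: "('d \<Rightarrow> 'd) \<Rightarrow> ('d \<Rightarrow> 'd) \<Rightarrow> 'd \<Rightarrow> 'd" where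
  "face_perm alpha rho = alpha \<circ> rho"

definition map_verts :: "'d set \<Rightarrow> ('d \<Rightarrow> 'd) \<Rightarrow> 'd set set" where
  "map_verts D rho = orb rho ` D"

definition map_edges :: "'d set \<Rightarrow> ('d \<Rightarrow> 'd) \<Rightarrow> 'd set set" where
  "map_edges D alpha = orb alpha ` D"

definition map_faces :: "'d set \<Rightarrow> ('d \<Rightarrow> 'd) \<Rightarrow> ('d \<Rightarrow> 'd) \<Rightarrow> 'd set set" where
  "map_faces D alpha rho = orb (face_perm alpha rho) ` D"

definition comb_map :: "'d set \<Rightarrow> ('d \<Rightarrow> 'd) \<Rightarrow> ('d \<Rightarrow> 'd) \<Rightarrow> bool" where
  "comb_map D alpha rho \<longleftrightarrow> finite D \<and> bij_betw rho D D \<and>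
     (\<forall>x\<in>D. alpha x \<in> D \<and> alpha x \<noteq> x \<and> alpha (alpha x) = x)"

definition map_connected :: "'d set \<Rightarrow> ('d \<Rightarrow> 'd) \<Rightarrow> ('d \<Rightarrow> 'd) \<Rightarrow> bool" where
  "map_connected D alpha rho \<longleftrightarrow>
     (\<forall>x\<in>D. \<forall>y\<in>D. (x, y) \<in> ({(z, alpha z) | z. z \<in> D} \<union> {(z, rho z) | z. z \<in> D})\<^sup>*)"

definition map_simple :: "'d set \<Rightarrow> ('d \<Rightarrow> 'd) \<Rightarrow> ('d \<Rightarrow> 'd) \<Rightarrow> bool" where
  "map_simple D alpha rho \<longleftrightarrow>
     (\<forall>x\<in>D. orb rho (alpha x) \<noteq> orb rho x) \<and>
     (\<forall>x\<in>D. \<forall>y\<in>D. orb rho x = orb rho y \<and> orb rho (alpha x) = orb rho (alpha y)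
                     \<longrightarrow> orb alpha x = orb alpha y)"

definition spherical_simple_map :: "'d set \<Rightarrow> ('d \<Rightarrow> 'd) \<Rightarrow> ('d \<Rightarrow> 'd) \<Rightarrow> bool" where
  "spherical_simple_map D alpha rho \<longleftrightarrow>
     comb_map D alpha rho \<and> D \<noteq> {} \<and> map_connected D alpha rho \<and> map_simple D alpha rho \<and>
     int (card (map_verts D rho)) - int (card (map_edges D alpha))
       + int (card (map_faces D alpha rho)) = 2"

text \<open>deg v = number of darts at v; the face at the corner of dart x is orb phi x.\<close>
definition curv :: "('d \<Rightarrow> 'd) \<Rightarrow> ('d \<Rightarrow> 'd) \<Rightarrow> 'd set \<Rightarrow> real" where
  "curv alpha rho v = 1 - real (card v) / 2
     + (\<Sum>x\<in>v. 1 / real (card (orb (face_perm alpha rho) x)))"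

definition is_prism :: "'d set \<Rightarrow> ('d \<Rightarrow> 'd) \<Rightarrow> ('d \<Rightarrow> 'd) \<Rightarrow> bool" where
  "is_prism D alpha rho \<longleftrightarrow> (\<exists>N A. N \<ge> 3 \<and> A \<subseteq> map_faces D alpha rho \<and> card A = 2 \<and>
     (\<forall>f\<in>A. card f = N) \<and>
     card (map_faces D alpha rho - A) = N \<and>
     (\<forall>f\<in>map_faces D alpha rho - A. card f = 4) \<and>
     card (map_verts D rho) = 2 * N \<and>
     (\<forall>v\<in>map_verts D rho. card v = 3 \<and>
        card {x\<in>v. orb (face_perm alpha rho) x \<in> A} = 1))"

definition is_antiprism :: "'d set \<Rightarrow> ('d \<Rightarrow> 'd) \<Rightarrow> ('d \<Rightarrow> 'd) \<Rightarrow> bool" where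
  "is_antiprism D alpha rho \<longleftrightarrow> (\<exists>N A. N \<ge> 3 \<and> A \<subseteq> map_faces D alpha rho \<and> card A = 2 \<and>
     (\<forall>f\<in>A. card f = N) \<and>
     card (map_faces D alpha rho - A) = 2 * N \<and>
     (\<forall>f\<in>map_faces D alpha rho - A. card f = 3) \<and>
     card (map_verts D rho) = 2 * N \<and>
     (\<forall>v\<in>map_verts D rho. card v = 4 \<and>
        card {x\<in>v. orb (face_perm alpha rho) x \<in> A} = 1))"

definition planar_PCC :: "'d set \<Rightarrow> ('d \<Rightarrow> 'd) \<Rightarrow> ('d \<Rightarrow> 'd) \<Rightarrow> bool" where
  "planar_PCC D alpha rho \<longleftrightarrow> spherical_simple_map D alpha rho \<and>
     (\<forall>v\<in>map_verts D rho. curv alpha rho v > 0 \<and> card v \<ge> 3) \<and>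
     \<not> is_prism D alpha rho \<and> \<not> is_antiprism D alpha rho"

end

theory Submission
  imports Defs
begin

text \<open>
  Let \<open>b\<close> and \<open>b'\<close> be the darts of \<open>\<kappa>\<close> on \<open>e\<close> and \<open>e'\<close>, so that the darts opposite to them
  lie in the big faces \<open>\<sigma>\<close> and \<open>\<sigma>'\<close>.  Since every face has length at least 3, positive
  curvature \<open>1 - deg v / 2 + \<Sum> 1 / |face|\<close> forbids two corners of one vertex in faces of length
  at least 20 and forces degree 3 at a vertex next to a big face and a non-triangle.  Playing
  this off against the faces around \<open>\<kappa>\<close> shows that \<open>b \<noteq> b'\<close> is impossible: at distance 1 the
  common vertex would have two big corners; at distance 2, \<open>\<kappa>\<close> must be a quadrilateral, and then
  the quadrilaterals along \<open>\<sigma>\<close> form a strip between \<open>\<sigma>\<close> and \<open>\<sigma>'\<close> that by connectedness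
  is the whole graph, a prism; at distance 3, \<open>\<kappa>\<close> is a hexagon, and the two big faces wrap
  around the triangles next to \<open>\<kappa>\<close> and meet again within four steps, so a big face would
  have length at most 8.
\<close>

section \<open>Orbits of a permutation of a finite set\<close>

locale finite_perm =
  fixes D :: "'a set" and f :: "'a \<Rightarrow> 'a"
  assumes finite_D: "finite D" and bij: "bij_betw f D D"
begin

lemma apply_in: "x \<in> D \<Longrightarrow> f x \<in> D"
  using bij bij_betwE by blast

lemma inj: "inj_on f D"
  using bij bij_betw_def by blast

lemma funpow_in: "x \<in> D \<Longrightarrow> (f ^^ n) x \<in> D"
  by (induction n) (auto simp: apply_in)

lemma funpow_inj: "x \<in> D \<Longrightarrow> y \<in> D \<Longrightarrow> (f ^^ n) x = (f ^^ n) y \<Longrightarrow> x = y"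
  using inj_onD[OF bij_betw_imp_inj_on[OF bij_betw_funpow[OF bij]]] by blast

lemma funpow_diff_fixed:
  assumes "x \<in> D" "i \<le> j" "(f ^^ i) x = (f ^^ j) x"
  shows "(f ^^ (j - i)) x = x"
proof -
  have "(f ^^ i) ((f ^^ (j - i)) x) = (f ^^ i) x"
    using assms(2,3) by (metis funpow_add le_add_diff_inverse o_apply)
  then show ?thesis
    using funpow_inj funpow_in assms(1) by blast
qed

lemma periodic: "x \<in> D \<Longrightarrow> \<exists>p>0. (f ^^ p) x = x"
proof -
  assume x: "x \<in> D"
  have "(\<lambda>n. (f ^^ n) x) ` {..card D} \<subseteq> D"
    using funpow_in x by auto
  then have "\<not> inj_on (\<lambda>n. (f ^^ n) x) {..card D}"
    using card_inj_on_le[OF _ _ finite_D] by fastforce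
  then obtain i j where "i < j" "(f ^^ i) x = (f ^^ j) x"
    by (metis (no_types, lifting) inj_onI linorder_neqE_nat)
  then show ?thesis
    using funpow_diff_fixed[OF x] by (intro exI[of _ "j - i"]) auto
qed

definition period :: "'a \<Rightarrow> nat" where
  "period x = (LEAST p. 0 < p \<and> (f ^^ p) x = x)"

lemma period: "x \<in> D \<Longrightarrow> 0 < period x \<and> (f ^^ period x) x = x"
  unfolding period_def using LeastI_ex[OF periodic] by blast

lemma period_least: "0 < k \<Longrightarrow> (f ^^ k) x = x \<Longrightarrow> period x \<le> k"
  unfolding period_def by (simp add: Least_le)

lemma orb_eq_image_period: "x \<in> D \<Longrightarrow> orb f x = (\<lambda>i. (f ^^ i) x) ` {..<period x}"
proof -
  assume x: "x \<in> D"
  have "(f ^^ n) x = (f ^^ (n mod period x)) x" for n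
    using funpow_mod_eq[where f = f and n = "period x" and x = x and m = n] period[OF x] by simp
  moreover have "n mod period x < period x" for n
    using period[OF x] by simp
  ultimately show ?thesis
    unfolding orb_def by (auto intro: image_eqI)
qed

lemma inj_on_funpow_period: "x \<in> D \<Longrightarrow> inj_on (\<lambda>i. (f ^^ i) x) {..<period x}"
proof (rule inj_onI)
  fix i j assume x: "x \<in> D" and ij: "i \<in> {..<period x}" "j \<in> {..<period x}"
    and eq: "(f ^^ i) x = (f ^^ j) x"
  have False if "i < j" "(f ^^ i) x = (f ^^ j) x" "j < period x" for i j
    using that funpow_diff_fixed[OF x] period_least[of "j - i" x] by simp
  then show "i = j"
    using ij eq by (metis lessThan_iff linorder_neqE_nat)
qed

lemma card_orb: "x \<in> D \<Longrightarrow> card (orb f x) = period x"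
  using orb_eq_image_period inj_on_funpow_period card_image by fastforce

lemma funpow_card_orb: "x \<in> D \<Longrightarrow> (f ^^ card (orb f x)) x = x"
  using card_orb period by simp

lemma card_orb_le: "x \<in> D \<Longrightarrow> 0 < k \<Longrightarrow> (f ^^ k) x = x \<Longrightarrow> card (orb f x) \<le> k"
  using card_orb period_least by simp

lemma card_orb_ge_3_imp: "x \<in> D \<Longrightarrow> card (orb f x) \<ge> 3 \<Longrightarrow> f x \<noteq> x \<and> f (f x) \<noteq> x"
  using card_orb_le[of x 1] card_orb_le[of x 2] by (auto simp: numeral_2_eq_2)

lemma orb_subset: "x \<in> D \<Longrightarrow> orb f x \<subseteq> D"
  unfolding orb_def using funpow_in by auto

lemma finite_orb: "x \<in> D \<Longrightarrow> finite (orb f x)"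
  using orb_subset finite_D finite_subset by blast

lemma in_orb_self: "x \<in> orb f x"
  unfolding orb_def by (auto intro: exI[of _ 0])

lemma funpow_in_orb: "(f ^^ n) x \<in> orb f x"
  unfolding orb_def by auto

lemma apply_in_orb: "f x \<in> orb f x"
  using funpow_in_orb[of 1] by simp

lemma orb_eq_of_mem:
  assumes x: "x \<in> D" and y: "y \<in> orb f x"
  shows "orb f y = orb f x"
proof -
  obtain m where m: "y = (f ^^ m) x"
    using y unfolding orb_def by auto
  have "(f ^^ n) x \<in> orb f y" for n
  proof -
    let ?p = "period x"
    have p: "(f ^^ ?p) x = x"
      using period[OF x] by blast
    have "(f ^^ n) x = (f ^^ (n mod ?p)) x"
      using funpow_mod_eq[OF p] by metis
    also have "\<dots> = (f ^^ ((n + ?p * m) mod ?p)) x"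
      by simp
    also have "\<dots> = (f ^^ (n + ?p * m)) x"
      using funpow_mod_eq[OF p] by metis
    also have "\<dots> = (f ^^ (n + ?p * m - m + m)) x"
    proof -
      have "m \<le> ?p * m"
        using period[OF x] by simp
      then have "n + ?p * m - m + m = n + ?p * m"
        by linarith
      then show ?thesis
        by (simp only:)
    qed
    also have "\<dots> = (f ^^ (n + ?p * m - m)) y"
      by (simp add: m funpow_add)
    finally show ?thesis
      unfolding orb_def by blast
  qed
  moreover have "(f ^^ n) y \<in> orb f x" for n
    unfolding orb_def m by (auto intro: exI[of _ "n + m"] simp: funpow_add)
  ultimately show ?thesis
    unfolding orb_def by auto
qed

lemma orb_apply: "x \<in> D \<Longrightarrow> orb f (f x) = orb f x"
  using orb_eq_of_mem apply_in_orb by blast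

lemma apply_in_same_orb: "x \<in> D \<Longrightarrow> y \<in> orb f x \<Longrightarrow> f y \<in> orb f x"
  using orb_eq_of_mem apply_in_orb by metis

lemma orb_eq_of_common:
  "x \<in> D \<Longrightarrow> y \<in> D \<Longrightarrow> z \<in> orb f x \<Longrightarrow> z \<in> orb f y \<Longrightarrow> orb f x = orb f y"
  using orb_eq_of_mem by metis

lemma card_eq_sum_card_orbs: "card D = sum card (orb f ` D)"
proof -
  have "\<Union>(orb f ` D) = D"
    using orb_subset in_orb_self by blast
  moreover have "card (\<Union>(orb f ` D)) = sum card (orb f ` D)"
  proof (rule card_Union_disjoint)
    show "pairwise disjnt (orb f ` D)"
      unfolding pairwise_def disjnt_def using orb_eq_of_common by blast
  qed (use finite_orb in auto)
  ultimately show ?thesis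
    by simp
qed

definition inv_f :: "'a \<Rightarrow> 'a" where
  "inv_f = inv_into D f"

lemma inv_f_in: "y \<in> D \<Longrightarrow> inv_f y \<in> D"
  unfolding inv_f_def by (metis bij bij_betw_def inv_into_into)

lemma apply_inv_f [simp]: "y \<in> D \<Longrightarrow> f (inv_f y) = y"
  unfolding inv_f_def by (metis bij bij_betw_inv_into_right)

lemma inv_f_apply [simp]: "x \<in> D \<Longrightarrow> inv_f (f x) = x"
  unfolding inv_f_def by (metis bij bij_betw_inv_into_left)

lemma inv_f_in_orb: "y \<in> D \<Longrightarrow> inv_f y \<in> orb f y"
proof -
  assume y: "y \<in> D"
  have "f ((f ^^ (period y - 1)) y) = y"
    using period[OF y] by (metis Suc_diff_1 funpow.simps(2) o_apply)
  then have "(f ^^ (period y - 1)) y = inv_f y"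
    using y funpow_in inv_f_apply by metis
  then show ?thesis
    using funpow_in_orb by metis
qed

end

section \<open>Planar PCC maps\<close>

lemma one_div_nat_le: "0 < k \<Longrightarrow> (k::nat) \<le> n \<Longrightarrow> 1 / real n \<le> 1 / real k"
  by (simp add: frac_le)

lemma nat_less_of_one_div_less: "0 < k \<Longrightarrow> 1 / real k < 1 / real (n::nat) \<Longrightarrow> n < k"
  using one_div_nat_le[of k n] by linarith

lemma sum_le_sum_subset_plus_card_diff:
  assumes "finite V" "S \<subseteq> V" "\<And>y. y \<in> V \<Longrightarrow> h y \<le> (c::real)"
  shows "sum h V \<le> sum h S + real (card V - card S) * c"
proof -
  have "sum h V = sum h S + sum h (V - S)"
    using assms(1,2) by (metis add.commute sum.subset_diff)
  moreover have "sum h (V - S) \<le> real (card (V - S)) * c"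
    using sum_bounded_above[of "V - S" h c] assms(3) by auto
  moreover have "card (V - S) = card V - card S"
    using assms(1,2) card_Diff_subset finite_subset by blast
  ultimately show ?thesis
    by simp
qed

locale planar_pcc =
  fixes D :: "'d set" and alpha rho :: "'d \<Rightarrow> 'd"
  assumes pcc: "planar_PCC D alpha rho"
begin

abbreviation phi :: "'d \<Rightarrow> 'd" where
  "phi \<equiv> face_perm alpha rho"

lemma spherical: "spherical_simple_map D alpha rho"
  using pcc by (simp add: planar_PCC_def)

lemma comb_map: "comb_map D alpha rho"
  using spherical by (simp add: spherical_simple_map_def)

lemma finite_D: "finite D"
  using comb_map by (simp add: comb_map_def)

lemma bij_rho: "bij_betw rho D D"
  using comb_map by (simp add: comb_map_def)

lemma alpha_in [simp]: "x \<in> D \<Longrightarrow> alpha x \<in> D"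
  using comb_map by (simp add: comb_map_def)

lemma alpha_ne: "x \<in> D \<Longrightarrow> alpha x \<noteq> x"
  using comb_map by (simp add: comb_map_def)

lemma alpha_alpha [simp]: "x \<in> D \<Longrightarrow> alpha (alpha x) = x"
  using comb_map by (simp add: comb_map_def)

lemma rho_in [simp]: "x \<in> D \<Longrightarrow> rho x \<in> D"
  using bij_rho bij_betwE by blast

lemma phi_apply: "phi x = alpha (rho x)"
  by (simp add: face_perm_def)

lemma phi_in [simp]: "x \<in> D \<Longrightarrow> phi x \<in> D"
  by (simp add: phi_apply)

lemma alpha_phi: "x \<in> D \<Longrightarrow> alpha (phi x) = rho x"
  by (simp add: phi_apply)

lemma bij_alpha: "bij_betw alpha D D"
  by (rule bij_betw_byWitness[of _ alpha]) auto

lemma bij_phi: "bij_betw phi D D"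
  unfolding face_perm_def using bij_betw_trans[OF bij_rho bij_alpha] by simp

sublocale R: finite_perm D rho
  using finite_D bij_rho by unfold_locales

sublocale P: finite_perm D phi
  using finite_D bij_phi by unfold_locales

sublocale A: finite_perm D alpha
  using finite_D bij_alpha by unfold_locales

abbreviation rho' :: "'d \<Rightarrow> 'd" where
  "rho' \<equiv> R.inv_f"

definition fsize :: "'d \<Rightarrow> nat" where
  "fsize x = card (orb phi x)"

definition deg :: "'d \<Rightarrow> nat" where
  "deg x = card (orb rho x)"

lemma rho'_in [simp]: "x \<in> D \<Longrightarrow> rho' x \<in> D"
  using R.inv_f_in by blast

lemma phi_rho': "x \<in> D \<Longrightarrow> phi (rho' x) = alpha x"
  by (simp add: phi_apply)

lemma rho_inj: "x \<in> D \<Longrightarrow> y \<in> D \<Longrightarrow> rho x = rho y \<Longrightarrow> x = y"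
  using R.inj inj_onD by metis

lemma phi_inj: "x \<in> D \<Longrightarrow> y \<in> D \<Longrightarrow> phi x = phi y \<Longrightarrow> x = y"
  using P.inj inj_onD by metis

lemma alpha_inj: "x \<in> D \<Longrightarrow> y \<in> D \<Longrightarrow> alpha x = alpha y \<Longrightarrow> x = y"
  by (metis alpha_alpha)

lemma fsize_phi [simp]: "x \<in> D \<Longrightarrow> fsize (phi x) = fsize x"
  unfolding fsize_def using P.orb_apply by simp

lemma fsize_eq_of_mem: "x \<in> D \<Longrightarrow> y \<in> orb phi x \<Longrightarrow> fsize y = fsize x"
  unfolding fsize_def using P.orb_eq_of_mem by simp

lemma fsize_rho': "x \<in> D \<Longrightarrow> fsize (rho' x) = fsize (alpha x)"
  using fsize_phi[of "rho' x"] phi_rho' by simp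

lemma vertex_curv_pos: "x \<in> D \<Longrightarrow> curv alpha rho (orb rho x) > 0 \<and> card (orb rho x) \<ge> 3"
proof -
  assume "x \<in> D"
  then have "orb rho x \<in> map_verts D rho"
    by (simp add: map_verts_def)
  then show ?thesis
    using pcc by (simp add: planar_PCC_def)
qed

lemma deg_ge_3: "x \<in> D \<Longrightarrow> deg x \<ge> 3"
  using vertex_curv_pos deg_def by simp

lemma rho_ne: "x \<in> D \<Longrightarrow> rho x \<noteq> x \<and> rho (rho x) \<noteq> x"
  using R.card_orb_ge_3_imp deg_ge_3 deg_def by simp

lemma orb_alpha: "x \<in> D \<Longrightarrow> orb alpha x = {x, alpha x}"
proof -
  assume x: "x \<in> D"
  have "(alpha ^^ n) x = (if even n then x else alpha x)" for n
    by (induction n) (auto simp: x)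
  then show ?thesis
    unfolding orb_def by (auto intro: exI[of _ 0] exI[of _ 1])
qed

lemma simple: "map_simple D alpha rho"
  using spherical by (simp add: spherical_simple_map_def)

lemma no_loop: "x \<in> D \<Longrightarrow> orb rho (alpha x) \<noteq> orb rho x"
  using simple unfolding map_simple_def by blast

lemma no_multi_edge:
  "x \<in> D \<Longrightarrow> y \<in> D \<Longrightarrow> orb rho x = orb rho y \<Longrightarrow> orb rho (alpha x) = orb rho (alpha y)
    \<Longrightarrow> orb alpha x = orb alpha y"
  using simple unfolding map_simple_def by blast

lemma rho_ne_alpha: "x \<in> D \<Longrightarrow> rho x \<noteq> alpha x"
  using no_loop R.orb_apply by metis

text \<open>Faces of length 1 would be loops and faces of length 2 would be double edges.\<close>

lemma fsize_ge_3: "x \<in> D \<Longrightarrow> fsize x \<ge> 3"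
proof -
  assume x: "x \<in> D"
  have "phi x \<noteq> x"
  proof
    assume "phi x = x"
    then have "alpha (alpha (rho x)) = alpha x"
      by (simp add: phi_apply)
    then show False
      using rho_ne_alpha[OF x] x by simp
  qed
  moreover have "phi (phi x) \<noteq> x"
  proof
    assume "phi (phi x) = x"
    then have "alpha (alpha (rho (phi x))) = alpha x"
      by (simp add: phi_apply)
    then have "rho (phi x) = alpha x"
      using x by simp
    then have "orb rho (alpha x) = orb rho (alpha (rho x))"
      using R.orb_apply[of "phi x"] x by (simp add: phi_apply)
    moreover have "orb rho x = orb rho (rho x)"
      using R.orb_apply[OF x] by simp
    ultimately have "orb alpha x = orb alpha (rho x)"
      using no_multi_edge[of x "rho x"] x by simp
    then have "rho x \<in> {x, alpha x}"
      using orb_alpha[OF x] A.in_orb_self[of "rho x"] by simp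
    then show False
      using rho_ne[OF x] rho_ne_alpha[OF x] by blast
  qed
  moreover have "0 < P.period x" "(phi ^^ P.period x) x = x"
    using P.period[OF x] by auto
  ultimately have "P.period x \<noteq> 1" "P.period x \<noteq> 2"
    by (auto simp: numeral_2_eq_2)
  then show ?thesis
    unfolding fsize_def using P.card_orb[OF x] \<open>0 < P.period x\<close> by simp
qed

lemma one_div_fsize_le: "y \<in> D \<Longrightarrow> 1 / real (fsize y) \<le> 1 / 3"
  using one_div_nat_le[of 3 "fsize y"] fsize_ge_3 by simp

lemma corner_sum_subset_bound:
  assumes x: "x \<in> D" and S: "S \<subseteq> orb rho x"
  shows "real (deg x) / 2 - 1 < (\<Sum>y\<in>S. 1 / real (fsize y)) + real (deg x - card S) / 3"
proof -
  have "(\<Sum>y\<in>orb rho x. 1 / real (fsize y))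
      \<le> (\<Sum>y\<in>S. 1 / real (fsize y)) + real (card (orb rho x) - card S) * (1 / 3)"
    by (rule sum_le_sum_subset_plus_card_diff[OF R.finite_orb[OF x] S])
      (use one_div_fsize_le R.orb_subset[OF x] in blast)
  moreover have "real (deg x) / 2 - 1 < (\<Sum>y\<in>orb rho x. 1 / real (fsize y))"
    using vertex_curv_pos[OF x] unfolding curv_def fsize_def deg_def by simp
  ultimately show ?thesis
    unfolding deg_def by simp
qed

lemma no_two_big_corners:
  assumes x: "x \<in> D" and yz: "y \<in> orb rho x" "z \<in> orb rho x" "y \<noteq> z"
    and big: "fsize y \<ge> 20" "fsize z \<ge> 20"
  shows False
proof -
  have "real (deg x) / 2 - 1 < 1 / real (fsize y) + 1 / real (fsize z) + real (deg x - 2) / 3"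
    using corner_sum_subset_bound[of x "{y, z}"] x yz by simp
  moreover have "1 / real (fsize y) \<le> 1 / 20" "1 / real (fsize z) \<le> 1 / 20"
    using one_div_nat_le big by auto
  moreover have "real (deg x - 2) = real (deg x) - 2" "real (deg x) \<ge> 3"
    using deg_ge_3[OF x] by (simp_all add: of_nat_diff)
  ultimately show False
    by linarith
qed

lemma deg_le_4_at_big_corner:
  assumes x: "x \<in> D" and y: "y \<in> orb rho x" and big: "fsize y \<ge> 20"
  shows "deg x \<le> 4"
proof -
  have "real (deg x) / 2 - 1 < 1 / real (fsize y) + real (deg x - 1) / 3"
    using corner_sum_subset_bound[of x "{y}"] x y by simp
  moreover have "1 / real (fsize y) \<le> 1 / 20"
    using one_div_nat_le big by auto
  moreover have "real (deg x - 1) = real (deg x) - 1"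
    using deg_ge_3[OF x] by (simp add: of_nat_diff)
  ultimately show ?thesis
    by linarith
qed

lemma deg_3_at_big_and_non_triangle:
  assumes x: "x \<in> D" and yz: "y \<in> orb rho x" "z \<in> orb rho x" "y \<noteq> z"
    and big: "fsize y \<ge> 20" and non_triangle: "fsize z \<ge> 4"
  shows "deg x = 3"
proof -
  have "real (deg x) / 2 - 1 < 1 / real (fsize y) + 1 / real (fsize z) + real (deg x - 2) / 3"
    using corner_sum_subset_bound[of x "{y, z}"] x yz by simp
  moreover have "1 / real (fsize y) \<le> 1 / 20" "1 / real (fsize z) \<le> 1 / 4"
    using one_div_nat_le big non_triangle by auto
  moreover have "real (deg x - 2) = real (deg x) - 2" "real (deg x) \<ge> 3"
    using deg_ge_3[OF x] by (simp_all add: of_nat_diff)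
  ultimately show ?thesis
    by linarith
qed

lemma three_corners_bound:
  assumes x: "x \<in> D" and yzw: "y \<in> orb rho x" "z \<in> orb rho x" "w \<in> orb rho x"
    "y \<noteq> z" "y \<noteq> w" "z \<noteq> w"
  shows "real (deg x) / 2 - 1
    < 1 / real (fsize y) + 1 / real (fsize z) + 1 / real (fsize w) + real (deg x - 3) / 3"
  using corner_sum_subset_bound[of x "{y, z, w}"] x yzw by simp

lemma deg_3_corner_sum:
  assumes "x \<in> D" "deg x = 3" "y \<in> orb rho x" "z \<in> orb rho x" "w \<in> orb rho x"
    "y \<noteq> z" "y \<noteq> w" "z \<noteq> w"
  shows "1 / real (fsize y) + 1 / real (fsize z) + 1 / real (fsize w) > 1 / 2"
  using three_corners_bound[of x y z w] assms by simp

lemma deg_4_corner_sum: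
  assumes x: "x \<in> D" and d: "deg x = 4"
    and yzwu: "y \<in> orb rho x" "z \<in> orb rho x" "w \<in> orb rho x" "u \<in> orb rho x"
    "y \<noteq> z" "y \<noteq> w" "z \<noteq> w" "u \<noteq> y" "u \<noteq> z" "u \<noteq> w"
  shows "1 / real (fsize y) + 1 / real (fsize z) + 1 / real (fsize w) + 1 / real (fsize u) > 1"
  using corner_sum_subset_bound[of x "{y, z, w, u}"] x d yzwu by (simp add: algebra_simps)

lemma rho_rho_rho_eq: "x \<in> D \<Longrightarrow> deg x = 3 \<Longrightarrow> rho (rho (rho x)) = x"
  using R.funpow_card_orb[of x] deg_def by (simp add: eval_nat_numeral)

lemma rho_rho_eq_rho': "x \<in> D \<Longrightarrow> deg x = 3 \<Longrightarrow> rho (rho x) = rho' x"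
  using rho_rho_rho_eq by (metis R.inv_f_apply rho_in)

lemma rho4_eq: "x \<in> D \<Longrightarrow> deg x = 4 \<Longrightarrow> rho (rho (rho (rho x))) = x"
  using R.funpow_card_orb[of x] deg_def by (simp add: eval_nat_numeral)

lemma rho_rho_rho_ne: "x \<in> D \<Longrightarrow> deg x = 4 \<Longrightarrow> rho (rho (rho x)) \<noteq> x"
  using R.card_orb_le[of x 3] deg_def by (force simp: eval_nat_numeral)

lemma rho_in_orb: "rho x \<in> orb rho x"
  using R.apply_in_orb .

lemma rho_rho_in_orb: "rho (rho x) \<in> orb rho x"
  using R.funpow_in_orb[of 2 x] by (simp add: eval_nat_numeral)

lemma rho_rho_rho_in_orb: "rho (rho (rho x)) \<in> orb rho x"
  using R.funpow_in_orb[of 3 x] by (simp add: eval_nat_numeral)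

lemma rho'_in_orb: "x \<in> D \<Longrightarrow> rho' x \<in> orb rho x"
  using R.inv_f_in_orb .

lemma rho'_ne_rho: "x \<in> D \<Longrightarrow> rho' x \<noteq> rho x"
  using rho_ne by (metis R.apply_inv_f rho_in)

section \<open>Local configurations around big faces\<close>

lemma phi3_eq_of_triangle: "x \<in> D \<Longrightarrow> fsize x = 3 \<Longrightarrow> phi (phi (phi x)) = x"
  using P.funpow_card_orb[of x] fsize_def by (simp add: eval_nat_numeral)

lemma phi4_eq_of_quadrilateral: "x \<in> D \<Longrightarrow> fsize x = 4 \<Longrightarrow> phi (phi (phi (phi x))) = x"
  using P.funpow_card_orb[of x] fsize_def by (simp add: eval_nat_numeral)

lemma phi5_eq_of_pentagon: "x \<in> D \<Longrightarrow> fsize x = 5 \<Longrightarrow> phi (phi (phi (phi (phi x)))) = x"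
  using P.funpow_card_orb[of x] fsize_def by (simp add: eval_nat_numeral)

text \<open>
  A face is big if its length is at least 20.  Throughout, a dart \<open>x\<close> stands for the edge
  \<open>orb alpha x\<close> seen from the face of \<open>x\<close>, so \<open>alpha x\<close> lies in the face on the other side
  of that edge; \<open>rho x = alpha (phi x)\<close> and \<open>rho' x\<close> are the corners at the tail of \<open>x\<close> in the
  faces across \<open>phi x\<close> and across \<open>x\<close>.
\<close>

lemma no_big_faces_at_consecutive_edges:
  assumes w: "w \<in> D" and big: "fsize (alpha w) \<ge> 20" "fsize (alpha (phi w)) \<ge> 20"
  shows False
  using no_two_big_corners[OF w rho'_in_orb[OF w] rho_in_orb rho'_ne_rho[OF w]]
    big fsize_rho'[OF w] alpha_phi[OF w] by simp

lemma deg_3_after_big: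
  assumes z: "z \<in> D" and big: "fsize (alpha z) \<ge> 20" and non_triangle: "fsize z \<ge> 4"
  shows "rho (rho z) = rho' z
    \<and> 1 / real (fsize (alpha z)) + 1 / real (fsize z) + 1 / real (fsize (rho z)) > 1 / 2"
proof -
  have ne: "rho' z \<noteq> z" "z \<noteq> rho z"
    using rho_ne[OF z] R.apply_inv_f[OF z] by force+
  have d: "deg z = 3"
    using deg_3_at_big_and_non_triangle[OF z rho'_in_orb[OF z] R.in_orb_self ne(1)]
      fsize_rho'[OF z] big non_triangle by simp
  show ?thesis
    using deg_3_corner_sum[OF z d rho'_in_orb[OF z] R.in_orb_self rho_in_orb
        ne(1) rho'_ne_rho[OF z] ne(2)]
      rho_rho_eq_rho'[OF z d] fsize_rho'[OF z] by simp
qed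

lemma deg_3_before_big:
  assumes c: "c \<in> D" and big: "fsize (alpha (phi c)) \<ge> 20" and non_triangle: "fsize c \<ge> 4"
  shows "rho (rho (rho c)) = c
    \<and> 1 / real (fsize (alpha (phi c))) + 1 / real (fsize c) + 1 / real (fsize (alpha c)) > 1 / 2"
proof -
  have ne: "rho c \<noteq> c" "rho c \<noteq> rho (rho c)" "c \<noteq> rho (rho c)"
    using rho_ne[OF c] rho_inj[of c "rho c"] c by auto
  have d: "deg c = 3"
    using deg_3_at_big_and_non_triangle[OF c rho_in_orb R.in_orb_self ne(1)]
      alpha_phi[OF c] big non_triangle by simp
  have "fsize (rho (rho c)) = fsize (alpha c)"
    using fsize_phi[of "rho (rho c)"] c rho_rho_rho_eq[OF c d] by (simp add: phi_apply)
  then show ?thesis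
    using deg_3_corner_sum[OF c d rho_in_orb R.in_orb_self rho_rho_in_orb ne]
      rho_rho_rho_eq[OF c d] alpha_phi[OF c] by simp
qed

lemma middle_face_not_triangle:
  assumes z: "z \<in> D" and non_triangle: "fsize z \<ge> 4"
    and big: "fsize (alpha z) \<ge> 20" "fsize (alpha (phi (phi z))) \<ge> 20"
  shows "fsize (rho z) \<noteq> 3"
proof
  assume triangle: "fsize (rho z) = 3"
  define t where "t = phi (rho z)"
  have t: "t \<in> D" "t = alpha (rho' z)"
    using z deg_3_after_big[OF z big(1) non_triangle] by (simp_all add: t_def phi_apply)
  define s where "s = rho (rho (phi z))"
  have "fsize (phi z) \<ge> 4"
    using non_triangle z by simp
  then have "rho (rho (rho (phi z))) = phi z"
    using deg_3_before_big[of "phi z"] big(2) z by simp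
  then have s: "s \<in> D" "phi s = rho z"
    using z alpha_phi[OF z] by (simp_all add: s_def phi_apply)
  have "phi (phi t) = phi s"
    using phi3_eq_of_triangle[of "rho z"] triangle z s(2) by (simp add: t_def)
  then have "phi t = s"
    using phi_inj t(1) s(1) by simp
  moreover have "fsize (alpha t) \<ge> 20"
    using t z fsize_rho' big(1) by simp
  moreover have "fsize (alpha s) \<ge> 20"
  proof -
    have "alpha s = phi (alpha (phi (phi z)))"
      using z by (simp add: s_def phi_apply)
    then show ?thesis
      using big(2) z by simp
  qed
  ultimately show False
    using no_big_faces_at_consecutive_edges[OF t(1)] by simp
qed

lemma third_face_triangle:
  assumes "1 / real a + 1 / real b + 1 / real c > 1 / 2" "a \<ge> 20" "b \<ge> 5" "c \<ge> 3"
  shows "c = 3"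
proof -
  have "1 / real a \<le> 1 / 20" "1 / real b \<le> 1 / 5"
    using one_div_nat_le assms by auto
  then have "1 / 4 < 1 / real c"
    using assms(1) by linarith
  then show ?thesis
    using nat_less_of_one_div_less[of 4 c] assms(4) by simp
qed

lemma big_faces_at_distance_2_imp_quadrilateral:
  assumes z: "z \<in> D" and non_triangle: "fsize z \<ge> 4"
    and big: "fsize (alpha z) \<ge> 20" "fsize (alpha (phi (phi z))) \<ge> 20"
  shows "fsize z = 4"
proof (rule ccontr)
  assume "fsize z \<noteq> 4"
  then have "fsize z \<ge> 5"
    using non_triangle by simp
  moreover have "1 / real (fsize (alpha z)) + 1 / real (fsize z) + 1 / real (fsize (rho z)) > 1 / 2"
    using deg_3_after_big[OF z big(1) non_triangle] by blast
  ultimately have "fsize (rho z) = 3"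
    using third_face_triangle big(1) fsize_ge_3[OF rho_in[OF z]] by blast
  then show False
    using middle_face_not_triangle[OF z non_triangle big] by simp
qed

end

subsection \<open>A hexagon between two big faces\<close>

text \<open>
  The configuration of a hexagon \<open>\<kappa>\<close> with big faces across two opposite edges: \<open>x, b1, b2, b3\<close>
  are consecutive darts of \<open>\<kappa>\<close>, and \<open>alpha x\<close>, \<open>alpha b3\<close> lie in the big faces.  The darts
  \<open>t0, t1, t2\<close> go around the triangle across \<open>b1\<close>, whose edge \<open>t1\<close> borders the big face
  across \<open>x\<close>; \<open>u\<close> is the dart of the triangle across \<open>b2\<close> whose edge borders the big face
  across \<open>b3\<close>; and \<open>t2\<close> is the corner of the first triangle at the common vertex of \<open>b1\<close>
  and \<open>b2\<close>.  The two big faces turn out to come back to each other around the two triangles.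
\<close>

locale big_opposite_hexagon = planar_pcc +
  fixes x
  assumes x_in: "x \<in> D" and hexagon: "fsize x = 6"
    and big_x: "fsize (alpha x) \<ge> 20" and big_opposite: "fsize (alpha (phi (phi (phi x)))) \<ge> 20"
begin

definition "b1 = phi x"
definition "b2 = phi b1"
definition "b3 = phi b2"
definition "t0 = rho x"
definition "t1 = phi t0"
definition "t2 = phi t1"
definition "u = rho (rho b2)"

lemma in_D: "b1 \<in> D" "b2 \<in> D" "b3 \<in> D" "t0 \<in> D" "t1 \<in> D" "t2 \<in> D" "u \<in> D"
  using x_in by (simp_all add: b1_def b2_def b3_def t0_def t1_def t2_def u_def)

lemma fsize_b: "fsize b1 = 6" "fsize b2 = 6"
  using hexagon x_in by (simp_all add: b1_def b2_def)

lemma big_b3: "fsize (alpha b3) \<ge> 20"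
  using big_opposite by (simp add: b1_def b2_def b3_def)

lemma rho_rho_x: "rho (rho x) = rho' x"
  using deg_3_after_big[OF x_in big_x] hexagon by simp

lemma triangle_t0: "fsize t0 = 3"
proof -
  have "1 / real (fsize (alpha x)) + 1 / real (fsize x) + 1 / real (fsize (rho x)) > 1 / 2"
    using deg_3_after_big[OF x_in big_x] hexagon by simp
  from third_face_triangle[OF this big_x _ fsize_ge_3[OF rho_in[OF x_in]]] show ?thesis
    using hexagon by (simp add: t0_def)
qed

lemma phi_t2: "phi t2 = t0"
  using phi3_eq_of_triangle[OF in_D(4) triangle_t0] by (simp add: t1_def t2_def)

lemma triangle_t2: "fsize t2 = 3"
  using triangle_t0 in_D by (simp add: t2_def t1_def)

lemma alpha_t1: "alpha t1 = rho' x"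
  using rho_rho_x x_in by (simp add: t1_def t0_def phi_apply)

lemma big_rho'_t1: "fsize (rho' t1) \<ge> 20"
  using fsize_rho'[OF in_D(5)] alpha_t1 fsize_rho'[OF x_in] big_x by simp

lemma rho_rho_rho_b2: "rho (rho (rho b2)) = b2"
  using deg_3_before_big[OF in_D(2)] big_b3 fsize_b by (simp add: b3_def)

lemma triangle_alpha_b2: "fsize (alpha b2) = 3"
proof -
  have "1 / real (fsize (alpha (phi b2))) + 1 / real (fsize b2) + 1 / real (fsize (alpha b2))
      > 1 / 2"
    using deg_3_before_big[OF in_D(2)] big_b3 fsize_b by (simp add: b3_def)
  from third_face_triangle[OF this _ _ fsize_ge_3[OF alpha_in[OF in_D(2)]]] show ?thesis
    using big_b3 fsize_b by (simp add: b3_def)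
qed

lemma phi_u: "phi u = alpha b2"
  using rho_rho_rho_b2 by (simp add: u_def phi_apply)

lemma alpha_u: "alpha u = phi (alpha b3)"
  using alpha_phi[OF in_D(2)] by (simp add: u_def b3_def phi_apply)

lemma big_alpha_u: "fsize (alpha u) \<ge> 20"
  using alpha_u big_b3 in_D by simp

lemma phi3_u: "phi (phi (phi u)) = u"
  using phi3_eq_of_triangle[OF in_D(7)] triangle_alpha_b2 phi_u fsize_phi[OF in_D(7)] by simp

lemma rho_t2: "rho t2 = b1"
  using phi_t2 in_D x_in alpha_phi by (metis alpha_alpha t0_def b1_def)

lemma rho_b1: "rho b1 = alpha b2"
  using alpha_phi[OF in_D(1)] by (simp add: b2_def)

lemma rho_t1: "rho t1 = alpha t2"
  using alpha_phi[OF in_D(5)] by (simp add: t2_def)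

lemma corners_t2_distinct: "t2 \<noteq> rho t2" "t2 \<noteq> rho (rho t2)" "rho t2 \<noteq> rho (rho t2)"
  using rho_ne in_D by (metis rho_in)+

lemma deg_t2: "deg t2 = 3 \<or> deg t2 = 4"
proof -
  have "real (deg t2) / 2 - 1 < 1 / 3 + 1 / 6 + 1 / 3 + real (deg t2 - 3) / 3"
    using three_corners_bound[OF in_D(6) R.in_orb_self rho_in_orb rho_rho_in_orb
        corners_t2_distinct]
      triangle_t2 rho_t2 rho_b1 fsize_b triangle_alpha_b2 by simp
  moreover have "real (deg t2 - 3) = real (deg t2) - 3"
    using deg_ge_3[OF in_D(6)] by (simp add: of_nat_diff)
  ultimately show ?thesis
    using deg_ge_3[OF in_D(6)] by linarith
qed

lemma closes_if_deg_t2_3: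
  assumes "deg t2 = 3"
  shows "phi (phi (phi (alpha b3))) = alpha x"
proof -
  have "rho (alpha b2) = t2"
    using rho_rho_rho_eq[OF in_D(6) assms] rho_t2 rho_b1 by simp
  then have "phi (alpha t2) = u"
    using phi3_u phi_u by (simp add: phi_apply)
  then have "rho (alpha t2) = alpha u"
    using in_D by (metis alpha_alpha alpha_in phi_apply rho_in)
  then have "rho (rho t1) = alpha u"
    using rho_t1 by simp
  then have "alpha u = rho' t1"
    using no_two_big_corners[OF in_D(5) rho'_in_orb[OF in_D(5)] rho_rho_in_orb[of t1]]
      big_rho'_t1 big_alpha_u by force
  then show ?thesis
    using phi_rho'[OF in_D(5)] alpha_t1 phi_rho'[OF x_in] alpha_u by simp
qed

end

text \<open>If the common vertex of \<open>b1\<close> and \<open>b2\<close> has degree 4, its fourth corner is \<open>y\<close>.\<close>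

locale big_opposite_hexagon_deg_4 = big_opposite_hexagon +
  assumes deg_t2_4: "deg t2 = 4"
begin

definition "y = rho (alpha b2)"
definition "m2 = alpha y"

lemma y_in: "y \<in> D" and m2_in: "m2 \<in> D"
  using in_D by (simp_all add: y_def m2_def)

lemma y_eq: "y = rho (rho (rho t2))"
  using rho_t2 rho_b1 by (simp add: y_def)

lemma rho_y: "rho y = t2"
  using rho4_eq[OF in_D(6) deg_t2_4] y_eq by simp

lemma fsize_y_less_6: "fsize y < 6"
proof -
  have "y \<noteq> t2"
    using y_eq rho_rho_rho_ne[OF in_D(6) deg_t2_4] by simp
  moreover have "y \<noteq> rho t2" "y \<noteq> rho (rho t2)"
    using y_eq rho_ne rho_inj in_D(6) by (metis rho_in)+
  ultimately have "1 / real (fsize t2) + 1 / real (fsize (rho t2)) + 1 / real (fsize (rho (rho t2)))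
      + 1 / real (fsize y) > 1"
    using deg_4_corner_sum[OF in_D(6) deg_t2_4 R.in_orb_self rho_in_orb rho_rho_in_orb _
        corners_t2_distinct] y_eq rho_rho_rho_in_orb[of t2] by simp
  then have "1 / 6 < 1 / real (fsize y)"
    using rho_t2 rho_b1 fsize_b triangle_alpha_b2 triangle_t2 by simp
  then show ?thesis
    using nat_less_of_one_div_less[of 6 "fsize y"] by simp
qed

lemma phi_y: "phi y = alpha t2"
  using rho_y by (simp add: phi_apply)

lemma phi_m2: "phi m2 = u"
  using phi3_u phi_u by (simp add: phi_apply m2_def y_def)

lemma rho_m2: "rho m2 = alpha u"
  using phi_m2 m2_in by (metis alpha_alpha phi_apply rho_in)

lemma phi_rho'_m2: "phi (rho' m2) = y"
  using phi_rho'[OF m2_in] y_in by (simp add: m2_def)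

lemma fsize_alpha_t2: "fsize (alpha t2) = fsize y"
  using phi_y fsize_phi[OF y_in] by simp

lemma fsize_rho'_m2: "fsize (rho' m2) = fsize y"
  using phi_rho'_m2 fsize_phi[of "rho' m2"] m2_in by simp

lemma not_fsize_y_ge_4: "\<not> fsize y \<ge> 4"
proof
  assume non_triangle: "fsize y \<ge> 4"
  have "rho' t1 \<noteq> rho t1"
    using big_rho'_t1 rho_t1 fsize_alpha_t2 fsize_y_less_6 by auto
  then have "deg t1 = 3"
    using deg_3_at_big_and_non_triangle[OF in_D(5) rho'_in_orb[OF in_D(5)] rho_in_orb]
      big_rho'_t1 rho_t1 fsize_alpha_t2 non_triangle by simp
  then have "rho (alpha t2) = rho' t1"
    using rho_rho_eq_rho'[OF in_D(5)] rho_t1 by simp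
  define a where "a = alpha (rho' t1)"
  have a: "a \<in> D" "phi (phi y) = a" "fsize (alpha a) \<ge> 20"
    using in_D phi_y \<open>rho (alpha t2) = rho' t1\<close> big_rho'_t1 by (simp_all add: a_def phi_apply)
  have "rho m2 \<noteq> rho' m2"
    using rho_m2 big_alpha_u fsize_rho'_m2 fsize_y_less_6 by auto
  then have "deg m2 = 3"
    using deg_3_at_big_and_non_triangle[OF m2_in rho_in_orb rho'_in_orb[OF m2_in]]
      rho_m2 big_alpha_u fsize_rho'_m2 non_triangle by simp
  then have "rho (alpha u) = rho' m2"
    using rho_rho_eq_rho'[OF m2_in] rho_m2 by simp
  define w where "w = rho' m2"
  have "alpha w = phi (alpha u)"
    using \<open>rho (alpha u) = rho' m2\<close> by (simp add: w_def phi_apply)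
  then have w: "w \<in> D" "phi w = y" "fsize w = fsize y" "fsize (alpha w) \<ge> 20"
    using m2_in phi_rho'_m2 fsize_rho'_m2 big_alpha_u in_D by (simp_all add: w_def)
  consider "fsize y = 4" | "fsize y = 5"
    using non_triangle fsize_y_less_6 by linarith
  then show False
  proof cases
    case 1
    then have "phi a = w"
      using phi4_eq_of_quadrilateral[OF w(1)] w(2,3) a(2) by simp
    then show False
      using no_big_faces_at_consecutive_edges[OF a(1) a(3)] w(4) by simp
  next
    case 2
    then have "phi (phi a) = w"
      using phi5_eq_of_pentagon[OF w(1)] w(2,3) a(2) by simp
    moreover have "fsize a = 5"
      using a(2) 2 y_in by (metis fsize_phi phi_in)
    ultimately show False
      using big_faces_at_distance_2_imp_quadrilateral[OF a(1) _ a(3)] w(4) by simp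
  qed
qed

lemma triangle_y: "fsize y = 3"
  using not_fsize_y_ge_4 fsize_ge_3[OF y_in] by simp

definition "g = phi (phi y)"

lemma g_in: "g \<in> D"
  using y_in by (simp add: g_def)

lemma g_eq: "g = phi (alpha t2)"
  using phi_y by (simp add: g_def)

lemma rho'_m2: "rho' m2 = g"
  using phi_rho'_m2 phi3_eq_of_triangle[OF y_in triangle_y] phi_inj[OF _ g_in] m2_in
  by (metis g_def rho'_in)

lemma alpha_g_if_deg_t1_3: "deg t1 = 3 \<Longrightarrow> alpha g = rho' t1"
  using rho_rho_eq_rho'[OF in_D(5)] rho_t1 g_eq in_D by (simp add: phi_apply)

lemma alpha_g_if_deg_t1_4:
  assumes "deg t1 = 4"
  shows "fsize (alpha g) = 3 \<and> phi (alpha g) = alpha (rho' t1)"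
proof -
  define r where "r = rho (alpha t2)"
  have r: "r \<in> D" "r = rho (rho t1)"
    using in_D rho_t1 by (simp_all add: r_def)
  then have rho_r: "rho r = rho' t1"
    using rho4_eq[OF in_D(5) assms] in_D by (metis R.inv_f_apply rho_in)
  have "fsize r < 4"
  proof (rule ccontr)
    assume "\<not> fsize r < 4"
    moreover have "rho' t1 \<noteq> r"
      using rho_r rho_ne r(1) by metis
    moreover have "r \<in> orb rho t1"
      using r(2) rho_rho_in_orb by simp
    ultimately have "deg t1 = 3"
      using deg_3_at_big_and_non_triangle[OF in_D(5) rho'_in_orb[OF in_D(5)] _ _ big_rho'_t1]
      by simp
    then show False
      using assms by simp
  qed
  then have "fsize r = 3"
    using fsize_ge_3[OF r(1)] by simp
  moreover have "alpha g = r"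
    using g_eq in_D by (simp add: phi_apply r_def)
  moreover have "phi r = alpha (rho' t1)"
    using rho_r by (simp add: phi_apply)
  ultimately show ?thesis
    by simp
qed

lemma alpha_g_if_deg_m2_3: "deg m2 = 3 \<Longrightarrow> alpha g = phi (alpha u)"
  using rho_rho_eq_rho'[OF m2_in] rho_m2 rho'_m2 in_D by (simp add: phi_apply)

lemma alpha_g_if_deg_m2_4:
  assumes "deg m2 = 4"
  shows "\<exists>r\<in>D. fsize r = 3 \<and> phi r = alpha g \<and> alpha r = phi (alpha u)"
proof -
  define r where "r = rho (alpha u)"
  have r: "r \<in> D" "r = rho (rho m2)"
    using in_D rho_m2 by (simp_all add: r_def)
  then have rho_r: "rho r = rho' m2"
    using rho4_eq[OF m2_in assms] m2_in by (metis R.inv_f_apply rho_in)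
  have "fsize r < 4"
  proof (rule ccontr)
    assume "\<not> fsize r < 4"
    moreover have "rho m2 \<noteq> r"
      using r(2) rho_ne m2_in by (metis rho_in)
    moreover have "r \<in> orb rho m2"
      using r(2) rho_rho_in_orb by simp
    ultimately have "deg m2 = 3"
      using deg_3_at_big_and_non_triangle[OF m2_in rho_in_orb _ _ _] rho_m2 big_alpha_u
      by simp
    then show False
      using assms by simp
  qed
  then have "fsize r = 3"
    using fsize_ge_3[OF r(1)] by simp
  moreover have "phi r = alpha g"
    using rho_r rho'_m2 by (simp add: phi_apply)
  moreover have "alpha r = phi (alpha u)"
    by (simp add: r_def phi_apply)
  ultimately show ?thesis
    using r(1) by blast
qed

lemma deg_t1_m2: "deg t1 = 3 \<or> deg t1 = 4" "deg m2 = 3 \<or> deg m2 = 4"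
  using deg_le_4_at_big_corner[OF in_D(5) rho'_in_orb[OF in_D(5)] big_rho'_t1]
    deg_le_4_at_big_corner[OF m2_in rho_in_orb] rho_m2 big_alpha_u
    deg_ge_3[OF in_D(5)] deg_ge_3[OF m2_in] by fastforce+

lemma closes_if_deg_t2_4: "phi (phi (phi (phi (alpha b3)))) = alpha x"
proof -
  have "deg t1 = 3 \<and> deg m2 = 3"
  proof (rule ccontr)
    assume "\<not> (deg t1 = 3 \<and> deg m2 = 3)"
    then consider "deg t1 = 3" "deg m2 = 4" | "deg t1 = 4" "deg m2 = 3" | "deg t1 = 4" "deg m2 = 4"
      using deg_t1_m2 by blast
    then show False
    proof cases
      case 1
      then obtain r where "r \<in> D" "fsize r = 3" "phi r = rho' t1"
        using alpha_g_if_deg_t1_3 alpha_g_if_deg_m2_4 by metis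
      then show False
        using big_rho'_t1 fsize_phi by fastforce
    next
      case 2
      then show False
        using alpha_g_if_deg_t1_4 alpha_g_if_deg_m2_3 big_alpha_u in_D by fastforce
    next
      case 3
      obtain r where r: "r \<in> D" "fsize r = 3" "phi r = alpha g" "alpha r = phi (alpha u)"
        using alpha_g_if_deg_m2_4 3 by blast
      define a where "a = alpha (rho' t1)"
      have a: "a \<in> D" "fsize (alpha a) \<ge> 20"
        using in_D big_rho'_t1 by (simp_all add: a_def)
      have "phi a = r"
        using phi3_eq_of_triangle[OF r(1,2)] r(3) alpha_g_if_deg_t1_4 3 by (simp add: a_def)
      then show False
        using no_big_faces_at_consecutive_edges[OF a] r(4) big_alpha_u in_D by simp
    qed
  qed
  then have "phi (alpha u) = rho' t1"
    using alpha_g_if_deg_t1_3 alpha_g_if_deg_m2_3 by simp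
  then show ?thesis
    using phi_rho'[OF in_D(5)] alpha_t1 phi_rho'[OF x_in] alpha_u by simp
qed

end

context planar_pcc
begin

lemma big_opposite_hexagon_closes:
  assumes "x \<in> D" "fsize x = 6" "fsize (alpha x) \<ge> 20" "fsize (alpha (phi (phi (phi x)))) \<ge> 20"
  shows "phi (phi (phi (alpha (phi (phi (phi x)))))) = alpha x
    \<or> phi (phi (phi (phi (alpha (phi (phi (phi x))))))) = alpha x"
proof -
  interpret big_opposite_hexagon D alpha rho x
    using assms by unfold_locales
  consider "deg t2 = 3" | "deg t2 = 4"
    using deg_t2 by blast
  then show ?thesis
  proof cases
    case 1
    then show ?thesis
      using closes_if_deg_t2_3 by (simp add: b1_def b2_def b3_def)
  next
    case 2
    interpret big_opposite_hexagon_deg_4 D alpha rho x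
      using 2 by unfold_locales
    show ?thesis
      using closes_if_deg_t2_4 by (simp add: b1_def b2_def b3_def)
  qed
qed

text \<open>Going around the hexagon in both directions, the big face would have length at most 8.\<close>

lemma no_big_faces_at_opposite_edges_of_hexagon:
  assumes x: "x \<in> D" and hexagon: "fsize x = 6"
    and big: "fsize (alpha x) \<ge> 20" "fsize (alpha (phi (phi (phi x)))) \<ge> 20"
  shows False
proof -
  define x' where "x' = phi (phi (phi x))"
  have x': "x' \<in> D" "fsize x' = 6" "phi (phi (phi x')) = x"
    using x hexagon P.funpow_card_orb[OF x] unfolding x'_def
    by (simp_all, simp add: fsize_def eval_nat_numeral)
  have "\<exists>i\<in>{3, 4}. (phi ^^ i) (alpha x') = alpha x"
    using big_opposite_hexagon_closes[OF x hexagon big] by (simp add: x'_def eval_nat_numeral)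
  then obtain i where i: "i \<in> {3, 4}" "(phi ^^ i) (alpha x') = alpha x"
    by blast
  have "\<exists>j\<in>{3, 4}. (phi ^^ j) (alpha x) = alpha x'"
    using big_opposite_hexagon_closes[OF x'(1,2)] x'(3) big
    by (simp add: x'_def eval_nat_numeral)
  then obtain j where j: "j \<in> {3, 4}" "(phi ^^ j) (alpha x) = alpha x'"
    by blast
  have "(phi ^^ (i + j)) (alpha x) = alpha x"
    using i j by (simp add: funpow_add)
  then have "fsize (alpha x) \<le> 8"
    using P.card_orb_le[OF alpha_in[OF x], of "i + j"] i(1) j(1) unfolding fsize_def by auto
  then show False
    using big by simp
qed

subsection \<open>A quadrilateral between two big faces\<close>

definition big_opposite_quadrilateral :: "'d \<Rightarrow> bool" where
  "big_opposite_quadrilateral z \<longleftrightarrow>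
     z \<in> D \<and> fsize z = 4 \<and> fsize (alpha z) \<ge> 20 \<and> fsize (alpha (phi (phi z))) \<ge> 20"

lemma big_opposite_quadrilateral_in: "big_opposite_quadrilateral z \<Longrightarrow> z \<in> D"
  by (simp add: big_opposite_quadrilateral_def)

lemma big_opposite_quadrilateral_phi4:
  "big_opposite_quadrilateral z \<Longrightarrow> phi (phi (phi (phi z))) = z"
  using phi4_eq_of_quadrilateral big_opposite_quadrilateral_def by blast

lemma big_opposite_quadrilateral_phi2:
  "big_opposite_quadrilateral z \<Longrightarrow> big_opposite_quadrilateral (phi (phi z))"
  using big_opposite_quadrilateral_phi4 unfolding big_opposite_quadrilateral_def by simp

lemma orb_phi_quadrilateral:
  "z \<in> D \<Longrightarrow> fsize z = 4 \<Longrightarrow> orb phi z = {z, phi z, phi (phi z), phi (phi (phi z))}"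
proof -
  assume z: "z \<in> D" "fsize z = 4"
  then have "orb phi z = (\<lambda>i. (phi ^^ i) z) ` {..<4}"
    using P.orb_eq_image_period P.card_orb fsize_def by simp
  also have "{..<4::nat} = {0, 1, 2, 3}"
    by auto
  finally show ?thesis
    by (simp add: eval_nat_numeral)
qed

lemma fsize_rho_quadrilateral:
  assumes "big_opposite_quadrilateral z"
  shows "fsize (rho z) = 4"
proof -
  have z: "z \<in> D" "fsize z = 4" "fsize (alpha z) \<ge> 20" "fsize (alpha (phi (phi z))) \<ge> 20"
    using assms big_opposite_quadrilateral_def by auto
  have "1 / real (fsize (alpha z)) + 1 / real (fsize z) + 1 / real (fsize (rho z)) > 1 / 2"
    using deg_3_after_big[OF z(1) z(3)] z(2) by simp
  moreover have "1 / real (fsize (alpha z)) \<le> 1 / 20"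
    using one_div_nat_le z by auto
  ultimately have "1 / 5 < 1 / real (fsize (rho z))"
    using z(2) by simp
  then have "fsize (rho z) < 5"
    using nat_less_of_one_div_less[of 5 "fsize (rho z)"] by simp
  moreover have "fsize (rho z) \<noteq> 3"
    using middle_face_not_triangle[OF z(1) _ z(3) z(4)] z(2) by simp
  moreover have "fsize (rho z) \<ge> 3"
    using fsize_ge_3 z by simp
  ultimately show ?thesis
    by simp
qed

lemma orb_phi_rho': "z \<in> D \<Longrightarrow> orb phi (rho' z) = orb phi (alpha z)"
  using P.orb_apply[of "rho' z"] phi_rho' by simp

lemma next_quadrilateral:
  assumes quad: "big_opposite_quadrilateral z"
  defines "q \<equiv> alpha (phi (alpha z))"
  shows "big_opposite_quadrilateral q"
    and "orb phi (alpha (phi (phi q))) = orb phi (alpha (phi (phi z)))"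
    and "phi q = alpha (phi (phi (phi z)))"
proof -
  have z: "z \<in> D" "fsize z = 4" "fsize (alpha z) \<ge> 20" "fsize (alpha (phi (phi z))) \<ge> 20"
    using quad big_opposite_quadrilateral_def by auto
  define c where "c = phi (phi (phi z))"
  have c: "c \<in> D" "phi c = z" "fsize c = 4"
    using z big_opposite_quadrilateral_phi4[OF quad] by (simp_all add: c_def)
  have "rho (rho (rho c)) = c"
    using deg_3_before_big[OF c(1)] c z by simp
  moreover have "q = rho (rho c)"
  proof -
    have "alpha z = rho c"
      using alpha_phi[OF c(1)] c(2) by simp
    then show ?thesis
      using c(1) by (simp add: q_def phi_apply)
  qed
  ultimately have q: "q \<in> D" "phi q = alpha c"
    using c(1) by (simp_all add: phi_apply)
  show "phi q = alpha (phi (phi (phi z)))"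
    using q(2) by (simp add: c_def)
  have "fsize q = 4"
    using fsize_phi[OF q(1)] q(2)
      fsize_rho_quadrilateral[OF big_opposite_quadrilateral_phi2[OF quad]]
      alpha_phi z(1) by (simp add: c_def)
  moreover have "fsize (alpha q) \<ge> 20"
    using z by (simp add: q_def)
  moreover have second_big: "orb phi (alpha (phi (phi q))) = orb phi (alpha (phi (phi z)))"
  proof -
    define z2 where "z2 = phi (phi z)"
    have z2: "big_opposite_quadrilateral z2" "z2 \<in> D"
      using big_opposite_quadrilateral_phi2[OF quad] z(1) by (simp_all add: z2_def)
    have "rho (rho z2) = rho' z2"
      using deg_3_after_big[OF z2(2)] z2(1) unfolding big_opposite_quadrilateral_def by simp
    moreover have "rho z2 = alpha c"
      using alpha_phi[OF z2(2)] by (simp add: c_def z2_def)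
    ultimately have "alpha (phi (phi q)) = rho' z2"
      using q(2) z2(2) by (simp add: phi_apply)
    then show ?thesis
      using orb_phi_rho'[OF z2(2)] by (simp add: z2_def)
  qed
  moreover have "fsize (alpha (phi (phi q))) \<ge> 20"
    using second_big z(4) unfolding fsize_def by simp
  ultimately show "big_opposite_quadrilateral q"
    using q(1) big_opposite_quadrilateral_def by simp
  show "orb phi (alpha (phi (phi q))) = orb phi (alpha (phi (phi z)))"
    using second_big .
qed

lemma quadrilateral_along_big_face:
  assumes quad: "big_opposite_quadrilateral z" and s: "s \<in> orb phi (alpha z)"
  shows "big_opposite_quadrilateral (alpha s)
    \<and> orb phi (alpha (phi (phi (alpha s)))) = orb phi (alpha (phi (phi z)))"
proof -
  have z: "z \<in> D"
    using quad big_opposite_quadrilateral_in by blast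
  have "big_opposite_quadrilateral (alpha ((phi ^^ n) (alpha z)))
    \<and> orb phi (alpha (phi (phi (alpha ((phi ^^ n) (alpha z)))))) = orb phi (alpha (phi (phi z)))"
    for n
  proof (induction n)
    case 0
    then show ?case
      using quad z by simp
  next
    case (Suc n)
    define w where "w = alpha ((phi ^^ n) (alpha z))"
    have "alpha w = (phi ^^ n) (alpha z)"
      using P.funpow_in z by (simp add: w_def)
    then have "alpha ((phi ^^ Suc n) (alpha z)) = alpha (phi (alpha w))"
      by simp
    then show ?case
      using next_quadrilateral[of w] Suc.IH by (simp add: w_def)
  qed
  moreover obtain n where "s = (phi ^^ n) (alpha z)"
    using s unfolding orb_def by auto
  ultimately show ?thesis
    by simp
qed

lemma quadrilateral_corner_rho:
  assumes "big_opposite_quadrilateral z"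
  shows "phi (rho z) = alpha (rho' z)"
  using deg_3_after_big[of z] assms unfolding big_opposite_quadrilateral_def
  by (simp add: phi_apply)

end

text \<open>
  Starting from one such quadrilateral, the quadrilaterals across the edges of the first big
  face \<open>base1\<close> all reach the second big face \<open>base2\<close>; this strip is closed under \<open>alpha\<close>
  and \<open>rho\<close>, hence by connectedness it is the whole map, which is then a prism.
\<close>

locale quadrilateral_strip = planar_pcc +
  fixes z0
  assumes z0_quadrilateral: "big_opposite_quadrilateral z0"
begin

definition "base1 = orb phi (alpha z0)"
definition "base2 = orb phi (alpha (phi (phi z0)))"
definition "laterals = (\<lambda>s. orb phi (alpha s)) ` base1"
definition "base_darts = base1 \<union> base2"

lemma z0_in: "z0 \<in> D"
  using z0_quadrilateral big_opposite_quadrilateral_in by blast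

lemma base1_in: "s \<in> base1 \<Longrightarrow> s \<in> D"
  using P.orb_subset[of "alpha z0"] z0_in base1_def by auto

lemma base2_in: "s \<in> base2 \<Longrightarrow> s \<in> D"
  using P.orb_subset[of "alpha (phi (phi z0))"] z0_in base2_def by auto

lemma base_darts_in: "s \<in> base_darts \<Longrightarrow> s \<in> D"
  using base1_in base2_in base_darts_def by auto

lemma orb_base1: "s \<in> base1 \<Longrightarrow> orb phi s = base1"
  using P.orb_eq_of_mem z0_in base1_def by simp

lemma orb_base2: "s \<in> base2 \<Longrightarrow> orb phi s = base2"
  using P.orb_eq_of_mem z0_in base2_def by simp

lemma in_base1: "s \<in> D \<Longrightarrow> orb phi s = base1 \<Longrightarrow> s \<in> base1"
  using P.in_orb_self by metis

lemma in_base2: "s \<in> D \<Longrightarrow> orb phi s = base2 \<Longrightarrow> s \<in> base2"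
  using P.in_orb_self by metis

lemma card_base1: "card base1 \<ge> 20"
  using z0_quadrilateral unfolding big_opposite_quadrilateral_def fsize_def base1_def by simp

lemma card_base2: "card base2 \<ge> 20"
  using z0_quadrilateral unfolding big_opposite_quadrilateral_def fsize_def base2_def by simp

lemma alpha_base1:
  "s \<in> base1 \<Longrightarrow> big_opposite_quadrilateral (alpha s) \<and> orb phi (alpha (phi (phi (alpha s)))) = base2"
  using quadrilateral_along_big_face[OF z0_quadrilateral] base1_def base2_def by simp

lemma alpha_base2:
  "s \<in> base2 \<Longrightarrow> big_opposite_quadrilateral (alpha s) \<and> orb phi (alpha (phi (phi (alpha s)))) = base1"
  using quadrilateral_along_big_face[OF big_opposite_quadrilateral_phi2[OF z0_quadrilateral]]
    big_opposite_quadrilateral_phi4[OF z0_quadrilateral] base1_def base2_def by simp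

lemma fsize_base_dart: "s \<in> base_darts \<Longrightarrow> fsize s \<ge> 20"
  using orb_base1 orb_base2 card_base1 card_base2 unfolding fsize_def base_darts_def by auto

lemma lateral_face:
  "Q \<in> laterals \<Longrightarrow> \<exists>s\<in>base1. Q = orb phi (alpha s) \<and> big_opposite_quadrilateral (alpha s)"
  using alpha_base1 laterals_def by auto

lemma fsize_lateral_dart: "Q \<in> laterals \<Longrightarrow> y \<in> Q \<Longrightarrow> fsize y = 4"
  using lateral_face fsize_eq_of_mem big_opposite_quadrilateral_def by fastforce

lemma lateral_subset: "Q \<in> laterals \<Longrightarrow> Q \<subseteq> D"
  unfolding laterals_def using P.orb_subset alpha_in base1_in by blast

lemma base_dart_notin_lateral: "y \<in> base_darts \<Longrightarrow> Q \<in> laterals \<Longrightarrow> y \<notin> Q"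
  using fsize_base_dart fsize_lateral_dart by fastforce

lemma alpha_base_dart_in_lateral: "y \<in> base_darts \<Longrightarrow> \<exists>Q\<in>laterals. alpha y \<in> Q"
proof -
  assume y: "y \<in> base_darts"
  show ?thesis
  proof (cases "y \<in> base1")
    case True
    then show ?thesis
      using laterals_def P.in_orb_self by blast
  next
    case False
    then have y2: "y \<in> base2" "y \<in> D"
      using y base_darts_def base2_in by auto
    define s where "s = alpha (phi (phi (alpha y)))"
    have "s \<in> base1"
      using alpha_base2[OF y2(1)] in_base1 y2(2) by (simp add: s_def)
    moreover have "orb phi (alpha s) = orb phi (alpha y)"
      using y2(2) P.orb_apply by (simp add: s_def)
    ultimately show ?thesis
      using laterals_def P.in_orb_self by (metis image_eqI)
  qed
qed

lemma lateral_neighbours: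
  assumes s: "s \<in> base1"
  defines "z \<equiv> alpha s"
  shows "alpha z \<in> base1" and "alpha (phi (phi z)) \<in> base2"
    and "\<exists>Q\<in>laterals. alpha (phi z) \<in> Q" and "\<exists>Q\<in>laterals. alpha (phi (phi (phi z))) \<in> Q"
    and "rho' z \<in> base1" and "rho' (phi (phi z)) \<in> base2"
proof -
  have quad: "big_opposite_quadrilateral z"
    using alpha_base1 s z_def by simp
  have z: "z \<in> D" "alpha z = s"
    using base1_in[OF s] z_def by simp_all
  have second: "orb phi (alpha (phi (phi z))) = base2"
    using alpha_base1 s z_def by simp
  show "alpha z \<in> base1"
    using z s by simp
  show "alpha (phi (phi z)) \<in> base2"
    using second in_base2 z by simp
  show rho'_z: "rho' z \<in> base1"
    using orb_phi_rho'[OF z(1)] z orb_base1[OF s] in_base1 by simp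
  show "\<exists>Q\<in>laterals. alpha (phi z) \<in> Q"
  proof -
    have "orb phi (rho z) = orb phi (alpha (rho' z))"
      using quadrilateral_corner_rho[OF quad] P.orb_apply[of "rho z"] z by simp
    then have "rho z \<in> orb phi (alpha (rho' z))"
      using P.in_orb_self by metis
    then show ?thesis
      using rho'_z laterals_def alpha_phi z by auto
  qed
  show "\<exists>Q\<in>laterals. alpha (phi (phi (phi z))) \<in> Q"
  proof -
    have "phi s \<in> base1"
      using P.apply_in_same_orb z0_in s base1_def by simp
    moreover have "alpha (phi (phi (phi z))) \<in> orb phi (alpha (phi s))"
      using next_quadrilateral(3)[OF quad] z(2) P.apply_in_orb by metis
    ultimately show ?thesis
      using laterals_def by auto
  qed
  show "rho' (phi (phi z)) \<in> base2"
    using orb_phi_rho'[of "phi (phi z)"] second in_base2 z by simp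
qed

lemma lateral_darts:
  assumes "Q \<in> laterals" "y \<in> Q"
  obtains s where "s \<in> base1"
    "y \<in> {alpha s, phi (alpha s), phi (phi (alpha s)), phi (phi (phi (alpha s)))}"
  using assms lateral_face orb_phi_quadrilateral big_opposite_quadrilateral_def by metis

definition "strip_darts = base_darts \<union> \<Union>laterals"

lemma alpha_strip_darts: "y \<in> strip_darts \<Longrightarrow> alpha y \<in> strip_darts"
proof -
  assume y: "y \<in> strip_darts"
  show ?thesis
  proof (cases "y \<in> base_darts")
    case True
    then show ?thesis
      using alpha_base_dart_in_lateral strip_darts_def by blast
  next
    case False
    then obtain Q where "Q \<in> laterals" "y \<in> Q"
      using y strip_darts_def by auto
    then obtain s where "s \<in> base1"
      "y \<in> {alpha s, phi (alpha s), phi (phi (alpha s)), phi (phi (phi (alpha s)))}"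
      by (rule lateral_darts)
    then show ?thesis
      using lateral_neighbours[of s] unfolding strip_darts_def base_darts_def by blast
  qed
qed

lemma phi_strip_darts: "y \<in> strip_darts \<Longrightarrow> phi y \<in> strip_darts"
proof -
  assume y: "y \<in> strip_darts"
  have "y \<in> base1 \<Longrightarrow> phi y \<in> base1" "y \<in> base2 \<Longrightarrow> phi y \<in> base2"
    using P.apply_in_same_orb z0_in base1_def base2_def by simp_all
  moreover have "Q \<in> laterals \<Longrightarrow> y \<in> Q \<Longrightarrow> phi y \<in> Q" for Q
    using P.apply_in_same_orb laterals_def base1_in by auto
  ultimately show ?thesis
    using y unfolding strip_darts_def base_darts_def by blast
qed

lemma strip_darts_subset: "strip_darts \<subseteq> D"
  using base_darts_in lateral_subset strip_darts_def by auto

lemma rho_strip_darts: "y \<in> strip_darts \<Longrightarrow> rho y \<in> strip_darts"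
  using alpha_strip_darts phi_strip_darts alpha_phi strip_darts_subset by (metis subsetD)

lemma D_eq_strip: "D = base_darts \<union> \<Union>laterals"
proof -
  have "D \<subseteq> strip_darts"
  proof
    fix y assume y: "y \<in> D"
    have "map_connected D alpha rho"
      using spherical by (simp add: spherical_simple_map_def)
    then have "(alpha z0, y) \<in> ({(z, alpha z) | z. z \<in> D} \<union> {(z, rho z) | z. z \<in> D})\<^sup>*"
      using y z0_in unfolding map_connected_def by simp
    then show "y \<in> strip_darts"
    proof (induction rule: rtrancl_induct)
      case base
      then show ?case
        using P.in_orb_self strip_darts_def base_darts_def base1_def by auto
    next
      case (step b c)
      then show ?case
        using alpha_strip_darts rho_strip_darts by blast
    qed
  qed
  then show ?thesis
    using strip_darts_subset strip_darts_def by auto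
qed

lemma vertex_meets_base: "y \<in> D \<Longrightarrow> \<exists>w\<in>base_darts. w \<in> orb rho y"
proof -
  assume y: "y \<in> D"
  show ?thesis
  proof (cases "y \<in> base_darts")
    case True
    then show ?thesis
      using R.in_orb_self by blast
  next
    case False
    then obtain Q where "Q \<in> laterals" "y \<in> Q"
      using D_eq_strip y by blast
    then obtain s where s: "s \<in> base1"
      and y_cases: "y \<in> {alpha s, phi (alpha s), phi (phi (alpha s)), phi (phi (phi (alpha s)))}"
      by (rule lateral_darts)
    define z where "z = alpha s"
    have z: "z \<in> D" "phi (phi (phi (phi z))) = z"
      using alpha_base1[OF s] big_opposite_quadrilateral_in big_opposite_quadrilateral_phi4
      by (auto simp: z_def)
    note nb = lateral_neighbours[OF s, folded z_def]
    consider "y = z" | "y = phi z" | "y = phi (phi z)" | "y = phi (phi (phi z))"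
      using y_cases z_def by blast
    then show ?thesis
    proof cases
      case 1
      then show ?thesis
        using nb(5) rho'_in_orb[OF z(1)] base_darts_def by blast
    next
      case 2
      then have "rho y = alpha (phi (phi z))"
        using alpha_phi z(1) by simp
      then show ?thesis
        using nb(2) rho_in_orb[of y] base_darts_def by auto
    next
      case 3
      then show ?thesis
        using nb(6) rho'_in_orb[of "phi (phi z)"] z(1) base_darts_def by auto
    next
      case 4
      then have "rho y = alpha z"
        using alpha_phi[of "phi (phi (phi z))"] z by simp
      then show ?thesis
        using nb(1) rho_in_orb[of y] base_darts_def by auto
    qed
  qed
qed

lemma deg_base_dart: "w \<in> base_darts \<Longrightarrow> deg w = 3"
proof -
  assume w: "w \<in> base_darts"
  have w_in: "w \<in> D"
    using base_darts_in w by blast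
  have "phi w \<in> base_darts"
    using w P.apply_in_same_orb z0_in base1_def base2_def base_darts_def by auto
  then obtain Q where "Q \<in> laterals" "alpha (phi w) \<in> Q"
    using alpha_base_dart_in_lateral by blast
  then have "fsize (rho w) = 4"
    using fsize_lateral_dart alpha_phi w_in by simp
  moreover have "rho w \<noteq> w"
    using rho_ne w_in by blast
  ultimately show ?thesis
    using deg_3_at_big_and_non_triangle[OF w_in R.in_orb_self rho_in_orb _ fsize_base_dart[OF w]]
    by simp
qed

lemma vertex_at_base:
  "v \<in> map_verts D rho \<Longrightarrow> \<exists>w\<in>base_darts. v = orb rho w \<and> card v = 3"
proof -
  assume "v \<in> map_verts D rho"
  then obtain y where y: "y \<in> D" "v = orb rho y"
    unfolding map_verts_def by auto
  obtain w where w: "w \<in> base_darts" "w \<in> orb rho y"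
    using vertex_meets_base y by blast
  have "orb rho w = v"
    using R.orb_eq_of_mem y w by simp
  then show ?thesis
    using deg_base_dart w deg_def by auto
qed

lemma base_dart_iff: "x \<in> D \<Longrightarrow> orb phi x \<in> {base1, base2} \<longleftrightarrow> x \<in> base_darts"
proof -
  assume x: "x \<in> D"
  show ?thesis
  proof
    assume "orb phi x \<in> {base1, base2}"
    then show "x \<in> base_darts"
      using in_base1[OF x] in_base2[OF x] base_darts_def by auto
  next
    assume "x \<in> base_darts"
    then show "orb phi x \<in> {base1, base2}"
      using orb_base1 orb_base2 base_darts_def by auto
  qed
qed

lemma vertex_one_base_corner:
  "v \<in> map_verts D rho \<Longrightarrow> card {x\<in>v. orb phi x \<in> {base1, base2}} = 1"
proof -
  assume "v \<in> map_verts D rho"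
  then obtain w where w: "w \<in> base_darts" "v = orb rho w"
    using vertex_at_base by blast
  have w_in: "w \<in> D"
    using base_darts_in w by blast
  have "x = w" if x: "x \<in> v" "orb phi x \<in> {base1, base2}" for x
  proof -
    have "x \<in> D"
      using x w R.orb_subset w_in by auto
    then have big: "fsize x \<ge> 20"
      using base_dart_iff x(2) fsize_base_dart by blast
    show "x = w"
    proof (rule ccontr)
      assume "x \<noteq> w"
      then show False
        using no_two_big_corners[OF w_in _ R.in_orb_self _ big fsize_base_dart[OF w(1)]] x(1) w(2)
        by simp
    qed
  qed
  moreover have "w \<in> v" "orb phi w \<in> {base1, base2}"
    using w base_dart_iff w_in R.in_orb_self by auto
  ultimately have "{x\<in>v. orb phi x \<in> {base1, base2}} = {w}"
    by blast
  then show ?thesis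
    by simp
qed

lemma card_D_verts: "card D = 3 * card (map_verts D rho)"
proof -
  have "card D = sum card (map_verts D rho)"
    unfolding map_verts_def using R.card_eq_sum_card_orbs by simp
  also have "\<dots> = sum (\<lambda>v. 3) (map_verts D rho)"
    using vertex_at_base by (intro sum.cong) auto
  finally show ?thesis
    by simp
qed

lemma card_D_edges: "card D = 2 * card (map_edges D alpha)"
proof -
  have "card D = sum card (map_edges D alpha)"
    unfolding map_edges_def using A.card_eq_sum_card_orbs by simp
  also have "\<dots> = sum (\<lambda>v. 2) (map_edges D alpha)"
  proof (rule sum.cong)
    fix e assume "e \<in> map_edges D alpha"
    then obtain x where "x \<in> D" "e = orb alpha x"
      unfolding map_edges_def by auto
    then show "card e = 2"
      using orb_alpha alpha_ne[of x] by simp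
  qed simp
  finally show ?thesis
    by simp
qed

lemma laterals_disjoint: "Q \<in> laterals \<Longrightarrow> Q' \<in> laterals \<Longrightarrow> Q \<noteq> Q' \<Longrightarrow> Q \<inter> Q' = {}"
proof -
  assume Q: "Q \<in> laterals" "Q' \<in> laterals" "Q \<noteq> Q'"
  obtain s s' where s: "s \<in> base1" "Q = orb phi (alpha s)" "s' \<in> base1" "Q' = orb phi (alpha s')"
    using Q laterals_def by auto
  then have "alpha s \<in> D" "alpha s' \<in> D"
    using base1_in by auto
  then show ?thesis
    using P.orb_eq_of_common s Q(3) by blast
qed

lemma finite_laterals: "finite laterals"
  using laterals_def P.finite_orb z0_in base1_def by simp

lemma card_lateral: "Q \<in> laterals \<Longrightarrow> card Q = 4"
  using lateral_face big_opposite_quadrilateral_def fsize_def by force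

lemma finite_lateral: "Q \<in> laterals \<Longrightarrow> finite Q"
  using lateral_subset finite_D finite_subset by blast

lemma card_Union_laterals: "card (\<Union>laterals) = 4 * card laterals"
proof -
  have "card (\<Union>laterals) = sum card laterals"
    by (rule card_Union_disjoint)
      (use laterals_disjoint finite_lateral in \<open>auto simp: pairwise_def disjnt_def\<close>)
  also have "\<dots> = sum (\<lambda>Q. 4) laterals"
    using card_lateral by (intro sum.cong) auto
  finally show ?thesis
    by simp
qed

lemma card_D_split: "card D = card base_darts + card (\<Union>laterals)"
proof -
  have "base_darts \<inter> \<Union>laterals = {}"
    using base_dart_notin_lateral by blast
  moreover have "finite base_darts" "finite (\<Union>laterals)"
    using D_eq_strip finite_D by (auto intro: finite_subset)
  ultimately show ?thesis
    using D_eq_strip card_Un_disjoint by metis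
qed

text \<open>Each lateral face has exactly two edges on the bases, namely its first and third.\<close>

lemma card_lateral_alpha_base_darts:
  assumes Q: "Q \<in> laterals"
  shows "card (Q \<inter> alpha ` base_darts) = 2"
proof -
  obtain s where s: "s \<in> base1" "Q = orb phi (alpha s)" "big_opposite_quadrilateral (alpha s)"
    using lateral_face Q by blast
  define z where "z = alpha s"
  have z: "z \<in> D" "fsize z = 4"
    using s big_opposite_quadrilateral_def z_def by simp_all
  note nb = lateral_neighbours[OF s(1), folded z_def]
  have "y \<in> D \<Longrightarrow> y \<in> alpha ` base_darts \<longleftrightarrow> alpha y \<in> base_darts" for y
    using base_darts_in by (auto intro: image_eqI[of y alpha "alpha y"])
  moreover have "alpha (phi z) \<notin> base_darts" "alpha (phi (phi (phi z))) \<notin> base_darts"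
    using nb(3,4) base_dart_notin_lateral by blast+
  ultimately have "Q \<inter> alpha ` base_darts = {z, phi (phi z)}"
    using orb_phi_quadrilateral[OF z] s(2) z nb(1,2) base_darts_def by (auto simp: z_def)
  moreover have "phi (phi z) \<noteq> z"
    using P.card_orb_ge_3_imp[OF z(1)] z(2) fsize_def by simp
  ultimately show ?thesis
    by (simp add: eq_commute)
qed

lemma card_base_darts: "card base_darts = 2 * card laterals"
proof -
  have "alpha ` base_darts = (\<Union>Q\<in>laterals. Q \<inter> alpha ` base_darts)"
    using alpha_base_dart_in_lateral by blast
  moreover have "card (\<Union>Q\<in>laterals. Q \<inter> alpha ` base_darts)
      = (\<Sum>Q\<in>laterals. card (Q \<inter> alpha ` base_darts))"
    by (rule card_UN_disjoint) (use finite_laterals finite_lateral laterals_disjoint in auto)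
  moreover have "\<dots> = (\<Sum>Q\<in>laterals. 2)"
    using card_lateral_alpha_base_darts by (intro sum.cong) auto
  moreover have "inj_on alpha base_darts"
    using base_darts_in alpha_inj by (meson inj_onI)
  ultimately show ?thesis
    using card_image by fastforce
qed

lemma faces_eq: "map_faces D alpha rho = {base1, base2} \<union> laterals"
proof
  show "map_faces D alpha rho \<subseteq> {base1, base2} \<union> laterals"
  proof
    fix f assume "f \<in> map_faces D alpha rho"
    then obtain y where y: "y \<in> D" "f = orb phi y"
      unfolding map_faces_def by auto
    show "f \<in> {base1, base2} \<union> laterals"
    proof (cases "y \<in> base_darts")
      case True
      then show ?thesis
        using base_dart_iff y by auto
    next
      case False
      then obtain Q where Q: "Q \<in> laterals" "y \<in> Q"
        using D_eq_strip y by blast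
      then obtain s where "s \<in> base1" "Q = orb phi (alpha s)"
        using laterals_def by auto
      then have "orb phi y = Q"
        using P.orb_eq_of_mem Q base1_in by simp
      then show ?thesis
        using y Q by simp
    qed
  qed
  show "{base1, base2} \<union> laterals \<subseteq> map_faces D alpha rho"
    using z0_in base1_in unfolding base1_def base2_def laterals_def map_faces_def by auto
qed

lemma bases_notin_laterals: "{base1, base2} \<inter> laterals = {}"
  using card_lateral card_base1 card_base2 by fastforce

text \<open>The two bases are distinct by Euler's formula: otherwise \<open>V - E + F = 2k - 3k + (k + 1)\<close>.\<close>

lemma bases_distinct: "base1 \<noteq> base2"
proof -
  have "int (card (map_verts D rho)) - int (card (map_edges D alpha))
      + int (card (map_faces D alpha rho)) = 2"
    using spherical by (simp add: spherical_simple_map_def)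
  moreover have "card (map_faces D alpha rho) = card {base1, base2} + card laterals"
    using faces_eq bases_notin_laterals finite_laterals card_Un_disjoint
    by (metis finite.emptyI finite.insertI)
  moreover have "card D = 6 * card laterals"
    using card_D_split card_base_darts card_Union_laterals by simp
  ultimately have "card {base1, base2} = 2"
    using card_D_verts card_D_edges by simp
  then show ?thesis
    by auto
qed

lemma inj_on_lateral: "inj_on (\<lambda>s. orb phi (alpha s)) base1"
proof (rule inj_onI)
  fix s1 s2 assume s: "s1 \<in> base1" "s2 \<in> base1"
    and eq: "orb phi (alpha s1) = orb phi (alpha s2)"
  define z where "z = alpha s1"
  have z: "z \<in> D" "fsize z = 4"
    using alpha_base1[OF s(1)] big_opposite_quadrilateral_def z_def by simp_all
  note nb = lateral_neighbours[OF s(1), folded z_def]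
  have s2: "s2 \<in> D" "s2 \<in> base_darts"
    using base1_in s base_darts_def by simp_all
  have "alpha s2 \<in> {z, phi z, phi (phi z), phi (phi (phi z))}"
    using eq P.in_orb_self orb_phi_quadrilateral[OF z] z_def by metis
  moreover have "alpha s2 \<noteq> phi z" "alpha s2 \<noteq> phi (phi (phi z))"
    using nb(3,4) base_dart_notin_lateral s2 by (metis alpha_alpha)+
  moreover have "alpha s2 \<noteq> phi (phi z)"
  proof
    assume "alpha s2 = phi (phi z)"
    then have "s2 \<in> base2"
      using nb(2) s2(1) by (metis alpha_alpha)
    then show False
      using orb_base1 orb_base2 s bases_distinct by metis
  qed
  ultimately have "alpha s2 = z"
    by blast
  then show "s1 = s2"
    using s2(1) base1_in[OF s(1)] z_def by (metis alpha_alpha)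
qed

lemma card_laterals: "card laterals = card base1"
  using card_image[OF inj_on_lateral] laterals_def by simp

lemma card_base2_laterals: "card base2 = card laterals"
proof -
  have "base1 \<inter> base2 = {}"
    using orb_base1 orb_base2 bases_distinct by blast
  moreover have "finite base1" "finite base2"
    using finite_D base1_in base2_in by (auto intro: finite_subset)
  ultimately have "card base_darts = card base1 + card base2"
    using base_darts_def card_Un_disjoint by metis
  then show ?thesis
    using card_base_darts card_laterals by simp
qed

lemma prism: "is_prism D alpha rho"
  unfolding is_prism_def
proof (intro exI conjI)
  have laterals: "map_faces D alpha rho - {base1, base2} = laterals"
    using faces_eq bases_notin_laterals by blast
  show "card laterals \<ge> 3"
    using card_laterals card_base1 by simp
  show "{base1, base2} \<subseteq> map_faces D alpha rho"
    using faces_eq by blast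
  show "card {base1, base2} = 2"
    using bases_distinct by simp
  show "\<forall>f\<in>{base1, base2}. card f = card laterals"
    using card_laterals card_base2_laterals by simp
  show "card (map_faces D alpha rho - {base1, base2}) = card laterals"
    using laterals by simp
  show "\<forall>f\<in>map_faces D alpha rho - {base1, base2}. card f = 4"
    using laterals card_lateral by simp
  show "card (map_verts D rho) = 2 * card laterals"
    using card_D_verts card_D_split card_base_darts card_Union_laterals by simp
  show "\<forall>v\<in>map_verts D rho. card v = 3 \<and> card {x\<in>v. orb phi x \<in> {base1, base2}} = 1"
    using vertex_at_base vertex_one_base_corner by fastforce
qed

end

section \<open>Big faces sharing a small face\<close>

context planar_pcc
begin

lemma big_opposite_quadrilateral_imp_prism:
  "big_opposite_quadrilateral z \<Longrightarrow> is_prism D alpha rho"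
proof -
  assume "big_opposite_quadrilateral z"
  then interpret quadrilateral_strip D alpha rho z
    by unfold_locales
  show ?thesis
    using prism .
qed

lemma no_big_faces_at_distance_2:
  assumes z: "z \<in> D" and non_triangle: "fsize z \<ge> 4"
    and big: "fsize (alpha z) \<ge> 20" "fsize (alpha (phi (phi z))) \<ge> 20"
  shows False
proof -
  have "big_opposite_quadrilateral z"
    using big_faces_at_distance_2_imp_quadrilateral[OF assms] assms
    unfolding big_opposite_quadrilateral_def by simp
  then show False
    using big_opposite_quadrilateral_imp_prism pcc planar_PCC_def by blast
qed

lemma no_big_faces_at_short_distance:
  assumes b: "b \<in> D" and small: "fsize b \<le> 6" and j: "0 < j" "2 * j \<le> fsize b"
    and big: "fsize (alpha b) \<ge> 20" "fsize (alpha ((phi ^^ j) b)) \<ge> 20"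
  shows False
proof -
  consider "j = 1" | "j = 2" | "j = 3"
    using j small by linarith
  then show False
  proof cases
    case 1
    then show False
      using no_big_faces_at_consecutive_edges[OF b] big by simp
  next
    case 2
    then show False
      using no_big_faces_at_distance_2[OF b] big j(2) by (simp add: eval_nat_numeral)
  next
    case 3
    then show False
      using no_big_faces_at_opposite_edges_of_hexagon[OF b] big j(2) small
      by (simp add: eval_nat_numeral)
  qed
qed

text \<open>Swapping the two darts if necessary, they are at most half the face length apart.\<close>

lemma small_face_has_one_big_neighbour:
  assumes b: "b \<in> D" and b': "b' \<in> orb phi b" and small: "fsize b \<le> 6"
    and big: "fsize (alpha b) \<ge> 20" "fsize (alpha b') \<ge> 20"
  shows "b = b'"
proof (rule ccontr)
  assume ne: "b \<noteq> b'"
  define k where "k = fsize b"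
  obtain j where j: "j < k" "b' = (phi ^^ j) b"
    using b' P.orb_eq_image_period[OF b] P.card_orb[OF b] unfolding k_def fsize_def by auto
  have "0 < j"
    using j ne by (auto intro: gr0I)
  have b'_in: "b' \<in> D" and k_b': "fsize b' = k"
    using b' P.orb_subset[OF b] fsize_eq_of_mem[OF b] by (auto simp: k_def)
  have "(phi ^^ (k - j)) b' = (phi ^^ (k - j + j)) b"
    by (simp add: j(2) funpow_add)
  also have "\<dots> = b"
    using j(1) P.funpow_card_orb[OF b] by (simp add: k_def fsize_def)
  finally have b_again: "(phi ^^ (k - j)) b' = b" .
  show False
  proof (cases "2 * j \<le> k")
    case True
    then show False
      using no_big_faces_at_short_distance[OF b small \<open>0 < j\<close>] big j(2) k_def by simp
  next
    case False
    then have "2 * (k - j) \<le> fsize b'"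
      using k_b' by linarith
    then show False
      using no_big_faces_at_short_distance[OF b'_in, of "k - j"] small big j(1)
        b_again k_b' k_def by simp
  qed
qed

lemma edge_between_faces:
  assumes e: "e \<in> map_edges D alpha" and f: "f \<in> map_faces D alpha rho"
    and k: "k \<in> map_faces D alpha rho" and ek: "e \<inter> k \<noteq> {}" and ef: "e \<inter> f \<noteq> {}"
    and ne: "k \<noteq> f"
  obtains b where "b \<in> D" "orb phi b = k" "orb phi (alpha b) = f" "orb alpha b = e"
proof -
  obtain a where a: "a \<in> D" "e = orb alpha a"
    using e unfolding map_edges_def by auto
  obtain b where b: "b \<in> e" "b \<in> k"
    using ek by blast
  obtain c where c: "c \<in> e" "c \<in> f"
    using ef by blast
  have e_eq: "e = {a, alpha a}"
    using orb_alpha a by simp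
  have "b \<in> D" "c \<in> D"
    using b c e_eq a by auto
  moreover have "orb phi b = k" "orb phi c = f"
    using P.orb_eq_of_mem b(2) c(2) k f unfolding map_faces_def by auto
  moreover have "c = alpha b"
    using b c e_eq a ne calculation by auto
  moreover have "orb alpha b = e"
    using A.orb_eq_of_mem a b by simp
  ultimately show thesis
    using that by blast
qed

end

theorem lemma2p5:
  fixes D :: "'d set" and alpha rho :: "'d \<Rightarrow> 'd"
    and \<sigma> \<sigma>' \<kappa> e e' :: "'d set"
  assumes "planar_PCC D alpha rho"
    and "\<sigma> \<in> map_faces D alpha rho" and "\<sigma>' \<in> map_faces D alpha rho"
    and "\<kappa> \<in> map_faces D alpha rho"
    and "card \<sigma> \<ge> 20" and "card \<sigma>' \<ge> 20" and "card \<kappa> \<le> 6"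
    and "e \<in> map_edges D alpha" and "e' \<in> map_edges D alpha"
    and "e \<inter> \<kappa> \<noteq> {}" and "e \<inter> \<sigma> \<noteq> {}"
    and "e' \<inter> \<kappa> \<noteq> {}" and "e' \<inter> \<sigma>' \<noteq> {}"
  shows "\<sigma> = \<sigma>' \<and> e = e'"
proof -
  interpret planar_pcc D alpha rho
    using assms(1) by unfold_locales
  have "\<kappa> \<noteq> \<sigma>" "\<kappa> \<noteq> \<sigma>'"
    using assms(5-7) by auto
  then obtain b b' where
    b: "b \<in> D" "orb phi b = \<kappa>" "orb phi (alpha b) = \<sigma>" "orb alpha b = e" and
    b': "b' \<in> D" "orb phi b' = \<kappa>" "orb phi (alpha b') = \<sigma>'" "orb alpha b' = e'"
    using edge_between_faces assms(2-4,8-13) by metis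
  have "b = b'"
    using small_face_has_one_big_neighbour[OF b(1)] P.in_orb_self[of b'] b b' assms(5-7)
    unfolding fsize_def by simp
  then show ?thesis
    using b b' by simp
qed

end
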